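(* In the transactional panorama model with the lenses and metrics described in the context, for every lens $A$ among LCNB, LCMB, ICNB, $k$-GCNB, $k$-LCNB, $k$-LCMB we have $S(\mathrm{GCPB}) \le S(A) \le S(\mathrm{GCNB})$ and $I(\mathrm{GCPB}) \ge I(A) \ge I(\mathrm{GCNB})$.
   Context: A view graph is a DAG on a set $N$ of nodes (source data and views). Write transactions are processed one at a time; write transaction $w^{t_i}$ creates version $G^{t_i}$ with state set $V^{t_i}$ containing, for each node $n_k$, either its computed new result $v_k^{t_i}$, a placeholder $UC_k^{t_i}$ if $w^{t_i}$ updates $n_k$ but has not yet computed it, or its result from the previous version if $n_k$ is not updated. A version is committed once all its new results are computed; at any time there is the committed graph (most recently committed version, no UCs) and the latest graph (version of the most recent write transaction). Read transactions $r^{s_1},\dots,r^{s_m}$ each read the views in the current viewport and return immediately a set $H^{s_i}$ of states (results or UCs); $Time(r^{s_i})$ is its return time. A returned state's timestamp is that of its version. Lenses (rules for answering reads): GCPB returns the viewport states from the latest graph. GCNB returns them from the committed graph. LCNB returns them from the more recent of the committed and latest graphs that has zero UCs for the viewport. LCMB: if reading either the committed or the latest graph preserves monotonicity (no view gets a state with smaller timestamp than previously read), behave like LCNB; otherwise read the latest graph. ICNB returns, for each view independently, its most recently computed result. $k$-GCNB reads the latest graph if it has at most $k$ UCs in total, otherwise the committed graph. $k$-LCNB reads the more recent of the committed and latest graphs having at most $k$ UCs for the viewport. $k$-LCMB: if reading either graph preserves monotonicity, behave like $k$-LCNB; otherwise read the latest graph. Metrics for $R=\{r^{s_1},\dots,r^{s_m}\}$: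 invisibility $I(R)=\sum_{i=1}^{m-1}|H^{s_i}_{UC}|\,(Time(r^{s_{i+1}})-Time(r^{s_i}))$ where $H^{s_i}_{UC}$ is the set of UCs in $H^{s_i}$; staleness $S(R)=\sum_{i=1}^{m-1}\sum_{v_k^{t_j}\in H^{s_i}_{qr}}\mathbf{1}[v_k^{t_j}\notin V^{t_i}]\,(Time(r^{s_{i+1}})-Time(r^{s_i}))$ where $H^{s_i}_{qr}$ is the set of view results (non-UC states) in $H^{s_i}$ and $G^{t_i}$ is the latest version before $r^{s_i}$ starts. $S(A)$, $I(A)$ denote these metrics under lens $A$, where all lenses are compared on the same write transactions, the same order of computing new view results, and the same sequence of read transactions. *)

theory Defs
  imports Main "HOL.Real"
begin

text \<open>Write transactions are numbered 1..nW; version 0 is the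
  initial (committed) view graph whose results all exist.  Reads are numbered 1..nR.\<close>

record 'n scen =
  nW       :: nat
  upd      :: "nat \<Rightarrow> 'n set"       \<comment> \<open>nodes updated by write j\<close>
  wstart   :: "nat \<Rightarrow> real"        \<comment> \<open>time at which write j (version j) is created\<close>
  ctime    :: "'n \<Rightarrow> nat \<Rightarrow> real"  \<comment> \<open>time at which new result v_n^j is computed\<close>
  nR       :: nat
  rtime    :: "nat \<Rightarrow> real"        \<comment> \<open>Time(r^{s_i}) (reads return immediately)\<close>
  viewport :: "nat \<Rightarrow> 'n set"

text \<open>Well-formedness: versions created in order; a result is computed after its write is
  created; writes are processed one at a time (every new result of an earlier write is
  computed strictly before every new result of a later write); read times nondecreasing.\<close>

definition valid_scen :: "'n scen \<Rightarrow> bool" where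
  "valid_scen s \<longleftrightarrow>
     (\<forall>j j'. 1 \<le> j \<and> j \<le> j' \<and> j' \<le> nW s \<longrightarrow> wstart s j \<le> wstart s j') \<and>
     (\<forall>j n. 1 \<le> j \<and> j \<le> nW s \<and> n \<in> upd s j \<longrightarrow> wstart s j \<le> ctime s n j) \<and>
     (\<forall>j j' n n'. 1 \<le> j \<and> j < j' \<and> j' \<le> nW s \<and> n \<in> upd s j \<and> n' \<in> upd s j'
        \<longrightarrow> ctime s n j < ctime s n' j') \<and>
     (\<forall>i i'. 1 \<le> i \<and> i \<le> i' \<and> i' \<le> nR s \<longrightarrow> rtime s i \<le> rtime s i')"

datatype 'n state = Res 'n nat | UC 'n nat

fun is_uc :: "'n state \<Rightarrow> bool" where
  "is_uc (Res _ _) = False" | "is_uc (UC _ _) = True"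

text \<open>Timestamp of a state = timestamp of the write transaction that created it.\<close>
fun ts :: "'n state \<Rightarrow> nat" where
  "ts (Res _ l) = l" | "ts (UC _ l) = l"

definition latest :: "'n scen \<Rightarrow> real \<Rightarrow> nat" where
  "latest s t = Max {j. j \<le> nW s \<and> (j = 0 \<or> (1 \<le> j \<and> wstart s j \<le> t))}"

text \<open>Version j is committed at time t: it exists and all new results of it (and, since writes
  are processed one at a time, of all earlier writes) have been computed.\<close>
definition committed_at :: "'n scen \<Rightarrow> nat \<Rightarrow> real \<Rightarrow> bool" where
  "committed_at s j t \<longleftrightarrow> j \<le> latest s t \<and>
     (\<forall>l n. 1 \<le> l \<and> l \<le> j \<and> n \<in> upd s l \<longrightarrow> ctime s n l \<le> t)"

definition committed :: "'n scen \<Rightarrow> real \<Rightarrow> nat" where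
  "committed s t = Max {j. committed_at s j t}"

text \<open>Most recent write (\<le> j) that updates node n (0 = initial result).\<close>
definition lu :: "'n scen \<Rightarrow> nat \<Rightarrow> 'n \<Rightarrow> nat" where
  "lu s j n = Max {l. l \<le> j \<and> (l = 0 \<or> n \<in> upd s l)}"

definition gstate :: "'n scen \<Rightarrow> nat \<Rightarrow> real \<Rightarrow> 'n \<Rightarrow> 'n state" where
  "gstate s j t n = (let l = lu s j n in
     if l = 0 \<or> ctime s n l \<le> t then Res n l else UC n l)"

definition vstates :: "'n scen \<Rightarrow> nat \<Rightarrow> real \<Rightarrow> 'n state set" where
  "vstates s j t = range (gstate s j t)"

definition uc_vp :: "'n scen \<Rightarrow> nat \<Rightarrow> real \<Rightarrow> 'n set \<Rightarrow> nat" where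
  "uc_vp s j t P = card {n \<in> P. is_uc (gstate s j t n)}"

definition uc_total :: "'n scen \<Rightarrow> nat \<Rightarrow> real \<Rightarrow> nat" where
  "uc_total s j t = card {n. is_uc (gstate s j t n)}"

text \<open>Most recently computed result of node n at time t (its version index).\<close>
definition computed_versions :: "'n scen \<Rightarrow> 'n \<Rightarrow> real \<Rightarrow> nat set" where
  "computed_versions s n t =
     {0} \<union> {l. 1 \<le> l \<and> l \<le> nW s \<and> n \<in> upd s l \<and> ctime s n l \<le> t}"

definition mrc :: "'n scen \<Rightarrow> 'n \<Rightarrow> real \<Rightarrow> nat" where
  "mrc s n t = (THE l. l \<in> computed_versions s n t \<and>
      (\<forall>l' \<in> computed_versions s n t. l' \<noteq> l \<longrightarrow>
          l' = 0 \<or> (l \<noteq> 0 \<and> ctime s n l' < ctime s n l)))"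

datatype lens = GCPB | GCNB | LCNB | LCMB | ICNB
  | kGCNB nat | kLCNB nat | kLCMB nat

text \<open>k-LCNB choice of graph (LCNB is k = 0): the more recent of committed/latest graphs
  having at most k UCs in the viewport (the committed graph has none).\<close>
definition lc_graph :: "'n scen \<Rightarrow> nat \<Rightarrow> nat \<Rightarrow> nat" where
  "lc_graph s k i = (let t = rtime s i in
     if uc_vp s (latest s t) t (viewport s i) \<le> k then latest s t else committed s t)"

definition gc_graph :: "'n scen \<Rightarrow> nat \<Rightarrow> nat \<Rightarrow> nat" where
  "gc_graph s k i = (let t = rtime s i in
     if uc_total s (latest s t) t \<le> k then latest s t else committed s t)"

text \<open>Reading graph j at read i preserves monotonicity w.r.t. the previous answers
  prev (prev ! (i'-1) is the answer of read i').\<close>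
definition mono_ok :: "'n scen \<Rightarrow> ('n \<Rightarrow> 'n state) list \<Rightarrow> nat \<Rightarrow> nat \<Rightarrow> bool" where
  "mono_ok s prev i j \<longleftrightarrow> (\<forall>n \<in> viewport s i. \<forall>i'. 1 \<le> i' \<and> i' < i \<and> n \<in> viewport s i'
      \<longrightarrow> ts ((prev ! (i' - 1)) n) \<le> ts (gstate s j (rtime s i) n))"

fun mb_answers :: "'n scen \<Rightarrow> nat \<Rightarrow> nat \<Rightarrow> ('n \<Rightarrow> 'n state) list" where
  "mb_answers s k 0 = []"
| "mb_answers s k (Suc i) = (let prev = mb_answers s k i; t = rtime s (Suc i);
      L = latest s t; C = committed s t;
      g = (if mono_ok s prev (Suc i) C \<and> mono_ok s prev (Suc i) L
           then lc_graph s k (Suc i) else L)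
    in prev @ [gstate s g t])"

fun answer :: "'n scen \<Rightarrow> lens \<Rightarrow> nat \<Rightarrow> 'n \<Rightarrow> 'n state" where
  "answer s GCPB i = gstate s (latest s (rtime s i)) (rtime s i)"
| "answer s GCNB i = gstate s (committed s (rtime s i)) (rtime s i)"
| "answer s LCNB i = gstate s (lc_graph s 0 i) (rtime s i)"
| "answer s (kLCNB k) i = gstate s (lc_graph s k i) (rtime s i)"
| "answer s (kGCNB k) i = gstate s (gc_graph s k i) (rtime s i)"
| "answer s LCMB i = mb_answers s 0 i ! (i - 1)"
| "answer s (kLCMB k) i = mb_answers s k i ! (i - 1)"
| "answer s ICNB i = (\<lambda>n. Res n (mrc s n (rtime s i)))"

definition H :: "'n scen \<Rightarrow> lens \<Rightarrow> nat \<Rightarrow> 'n state set" where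
  "H s A i = answer s A i ` viewport s i"

definition invisibility :: "'n scen \<Rightarrow> lens \<Rightarrow> real" where
  "invisibility s A = (\<Sum>i\<in>{1..<nR s}.
     real (card {x \<in> H s A i. is_uc x}) * (rtime s (i + 1) - rtime s i))"

definition staleness :: "'n scen \<Rightarrow> lens \<Rightarrow> real" where
  "staleness s A = (\<Sum>i\<in>{1..<nR s}.
     (\<Sum>x\<in>{x \<in> H s A i. \<not> is_uc x}.
        (if x \<notin> vstates s (latest s (rtime s i)) (rtime s i) then 1 else 0))
     * (rtime s (i + 1) - rtime s i))"

end

theory Submission
  imports Defs
begin

text \<open>Every lens except ICNB answers a read from either the latest or the committed graph.
  The committed graph has no UCs and the latest graph has no stale results, so every UC a
  lens returns is also returned by GCPB, and every stale result it returns sits at a node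
  where the result returned by GCNB is stale too.  For ICNB the latter holds because writes
  are processed one at a time: the most recently computed result of a node is the one of
  the highest computed version, which is the node's state in the latest graph whenever that
  state is a result.  Both metrics add up these per-read counts with nonnegative weights.\<close>

fun state_node :: "'n state \<Rightarrow> 'n" where
  "state_node (Res n _) = n" | "state_node (UC n _) = n"

lemma state_node_gstate [simp]: "state_node (gstate s j t n) = n"
  by (simp add: gstate_def Let_def)

lemma inj_gstate: "inj (gstate s j t)"
  by (metis injI state_node_gstate)

lemma gstate_mem_vstates_iff:
  "gstate s j t n \<in> vstates s j' t \<longleftrightarrow> gstate s j t n = gstate s j' t n"
proof -
  have "gstate s j t n = gstate s j' t m \<Longrightarrow> m = n" for m
    by (metis state_node_gstate)
  then show ?thesis
    by (auto simp: vstates_def)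
qed

lemma
  assumes "valid_scen s"
  shows valid_scen_wstart_le_ctime:
      "\<lbrakk>1 \<le> j; j \<le> nW s; n \<in> upd s j\<rbrakk> \<Longrightarrow> wstart s j \<le> ctime s n j"
    and valid_scen_ctime_less:
      "\<lbrakk>1 \<le> j; j < j'; j' \<le> nW s; n \<in> upd s j; n' \<in> upd s j'\<rbrakk>
        \<Longrightarrow> ctime s n j < ctime s n' j'"
    and valid_scen_rtime_mono:
      "\<lbrakk>1 \<le> i; i \<le> i'; i' \<le> nR s\<rbrakk> \<Longrightarrow> rtime s i \<le> rtime s i'"
  using assms unfolding valid_scen_def by simp_all

lemma finite_latest_candidates:
  "finite {j. j \<le> nW s \<and> (j = 0 \<or> (1 \<le> j \<and> wstart s j \<le> t))}"
  by (rule finite_subset[of _ "{..nW s}"]) auto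

lemma latest_le_nW: "latest s t \<le> nW s"
  unfolding latest_def using finite_latest_candidates[of s t] by (subst Max_le_iff) auto

lemma le_latestI: "\<lbrakk>1 \<le> j; j \<le> nW s; wstart s j \<le> t\<rbrakk> \<Longrightarrow> j \<le> latest s t"
  unfolding latest_def using finite_latest_candidates[of s t] by (intro Max_ge) auto

lemma committed_at_committed: "committed_at s (committed s t) t"
proof -
  have "{j. committed_at s j t} \<subseteq> {..nW s}"
    using latest_le_nW[of s t] by (auto simp: committed_at_def)
  then have "finite {j. committed_at s j t}"
    by (rule finite_subset) simp
  moreover have "committed_at s 0 t"
    by (simp add: committed_at_def)
  ultimately have "committed s t \<in> {j. committed_at s j t}"
    unfolding committed_def by (intro Max_in) auto
  then show ?thesis
    by simp
qed

lemma finite_lu_candidates: "finite {l. l \<le> j \<and> (l = 0 \<or> n \<in> upd s l)}"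
  by (rule finite_subset[of _ "{..j}"]) auto

lemma lu_mem: "lu s j n \<in> {l. l \<le> j \<and> (l = 0 \<or> n \<in> upd s l)}"
  unfolding lu_def by (rule Max_in[OF finite_lu_candidates]) auto

lemma lu_le: "lu s j n \<le> j"
  using lu_mem[of s j n] by blast

lemma lu_upd: "lu s j n \<noteq> 0 \<Longrightarrow> n \<in> upd s (lu s j n)"
  using lu_mem[of s j n] by simp

lemma le_luI: "\<lbrakk>l \<le> j; n \<in> upd s l\<rbrakk> \<Longrightarrow> l \<le> lu s j n"
  unfolding lu_def by (rule Max_ge[OF finite_lu_candidates]) simp

lemma committed_no_uc: "\<not> is_uc (gstate s (committed s t) t n)"
proof -
  let ?l = "lu s (committed s t) n"
  have "?l = 0 \<or> ctime s n ?l \<le> t"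
    using committed_at_committed[of s t] lu_le[of s _ n] lu_upd[of s _ n]
    unfolding committed_at_def by (metis le_neq_implies_less less_one not_le)
  then show ?thesis
    by (auto simp: gstate_def Let_def)
qed

lemma finite_computed_versions: "finite (computed_versions s n t)"
  unfolding computed_versions_def by (rule finite_subset[of _ "{..nW s}"]) auto

lemma mrc_eq_Max:
  assumes valid: "valid_scen s"
  shows "mrc s n t = Max (computed_versions s n t)"
proof -
  let ?cv = "computed_versions s n t"
  let ?m = "Max ?cv"
  have m_mem: "?m \<in> ?cv"
    using finite_computed_versions by (rule Max_in) (auto simp: computed_versions_def)
  have le_m: "l \<le> ?m" if "l \<in> ?cv" for l
    using finite_computed_versions that by (rule Max_ge)
  have ctime_less: "ctime s n l < ctime s n l'"
    if "l \<in> ?cv" "l' \<in> ?cv" "l \<noteq> 0" "l < l'" for l l'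
    using that valid_scen_ctime_less[OF valid, of l l' n n]
    unfolding computed_versions_def by simp
  show ?thesis
    unfolding mrc_def
  proof (rule the_equality)
    show "?m \<in> ?cv \<and> (\<forall>l' \<in> ?cv. l' \<noteq> ?m \<longrightarrow>
        l' = 0 \<or> (?m \<noteq> 0 \<and> ctime s n l' < ctime s n ?m))"
    proof (intro conjI m_mem ballI impI)
      fix l'
      assume l': "l' \<in> ?cv" "l' \<noteq> ?m"
      then have "l' < ?m"
        using le_m[OF l'(1)] by simp
      then show "l' = 0 \<or> (?m \<noteq> 0 \<and> ctime s n l' < ctime s n ?m)"
        using ctime_less[OF l'(1) m_mem] by (cases "l' = 0") simp_all
    qed
  next
    fix l
    assume l: "l \<in> ?cv \<and> (\<forall>l' \<in> ?cv. l' \<noteq> l \<longrightarrow>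
        l' = 0 \<or> (l \<noteq> 0 \<and> ctime s n l' < ctime s n l))"
    show "l = ?m"
    proof (rule ccontr)
      assume "l \<noteq> ?m"
      then have "l < ?m"
        using le_m[OF conjunct1[OF l]] by simp
      moreover have "?m = 0 \<or> (l \<noteq> 0 \<and> ctime s n ?m < ctime s n l)"
        using l m_mem not_sym[OF \<open>l \<noteq> ?m\<close>] by blast
      ultimately show False
        using ctime_less[of l ?m] conjunct1[OF l] m_mem by simp
    qed
  qed
qed

lemma Max_computed_versions_eq_lu_latest:
  assumes valid: "valid_scen s" and result: "\<not> is_uc (gstate s (latest s t) t n)"
  shows "Max (computed_versions s n t) = lu s (latest s t) n"
proof (rule Max_eqI[OF finite_computed_versions])
  fix l
  assume "l \<in> computed_versions s n t"
  then consider "l = 0" | "1 \<le> l" "l \<le> nW s" "n \<in> upd s l" "ctime s n l \<le> t"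
    unfolding computed_versions_def by blast
  then show "l \<le> lu s (latest s t) n"
  proof cases
    case 2
    have "wstart s l \<le> t"
      using valid_scen_wstart_le_ctime[OF valid 2(1-3)] 2(4) by linarith
    then have "l \<le> latest s t"
      by (rule le_latestI[OF 2(1,2)])
    then show ?thesis
      using 2 by (intro le_luI)
  qed simp
next
  show "lu s (latest s t) n \<in> computed_versions s n t"
    using result lu_le[of s "latest s t" n] lu_upd[of s "latest s t" n] latest_le_nW[of s t]
    by (auto simp: computed_versions_def gstate_def Let_def split: if_splits)
qed

lemma gstate_eq_Res_if_not_uc: "\<not> is_uc (gstate s j t n) \<Longrightarrow> gstate s j t n = Res n (lu s j n)"
  by (simp add: gstate_def Let_def split: if_splits)

lemma answer_ICNB_eq_latest:
  assumes valid: "valid_scen s"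
    and result: "\<not> is_uc (gstate s (latest s (rtime s i)) (rtime s i) n)"
  shows "answer s ICNB i n = gstate s (latest s (rtime s i)) (rtime s i) n"
  using gstate_eq_Res_if_not_uc[OF result]
  by (simp add: mrc_eq_Max[OF valid] Max_computed_versions_eq_lu_latest[OF valid result])

lemma length_mb_answers: "length (mb_answers s k i) = i"
  by (induction i) (simp_all add: Let_def)

lemma mb_answers_last:
  "mb_answers s k (Suc i) ! i = gstate s (latest s (rtime s (Suc i))) (rtime s (Suc i)) \<or>
   mb_answers s k (Suc i) ! i = gstate s (committed s (rtime s (Suc i))) (rtime s (Suc i))"
  using length_mb_answers[of s k i] by (simp add: Let_def nth_append lc_graph_def)

lemma answer_latest_or_committed:
  assumes "1 \<le> i" and "A \<noteq> ICNB"
  shows "answer s A i = gstate s (latest s (rtime s i)) (rtime s i) \<or>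
         answer s A i = gstate s (committed s (rtime s i)) (rtime s i)"
proof -
  obtain i' where i: "i = Suc i'"
    using assms(1) by (cases i) auto
  show ?thesis
    using assms(2) mb_answers_last[of s _ i'] unfolding i
    by (cases A) (auto simp: lc_graph_def gc_graph_def Let_def)
qed

lemma finite_H: "finite (H (s :: ('n::finite) scen) A i)"
  by (simp add: H_def)

definition uc_answers :: "'n scen \<Rightarrow> lens \<Rightarrow> nat \<Rightarrow> 'n state set" where
  "uc_answers s A i = {x \<in> H s A i. is_uc x}"

definition stale_answers :: "'n scen \<Rightarrow> lens \<Rightarrow> nat \<Rightarrow> 'n state set" where
  "stale_answers s A i =
     {x \<in> H s A i. \<not> is_uc x \<and> x \<notin> vstates s (latest s (rtime s i)) (rtime s i)}"

lemma uc_answers_GCNB: "uc_answers s GCNB i = {}"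
  by (auto simp: uc_answers_def H_def committed_no_uc)

lemma card_uc_answers_le_GCPB:
  fixes s :: "('n::finite) scen"
  assumes "1 \<le> i"
  shows "card (uc_answers s A i) \<le> card (uc_answers s GCPB i)"
proof (rule card_mono)
  show "finite (uc_answers s GCPB i)"
    by (simp add: uc_answers_def finite_H)
  show "uc_answers s A i \<subseteq> uc_answers s GCPB i"
  proof (cases "A = ICNB")
    case False
    then show ?thesis
      using answer_latest_or_committed[OF assms False, of s]
      by (auto simp: uc_answers_def H_def committed_no_uc)
  qed (auto simp: uc_answers_def H_def)
qed

lemma stale_answers_GCPB: "stale_answers s GCPB i = {}"
  by (auto simp: stale_answers_def H_def vstates_def)

lemma answer_mem_latest_if_committed_mem_latest:
  assumes valid: "valid_scen s" and "1 \<le> i"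
    and committed_mem: "gstate s (committed s (rtime s i)) (rtime s i) n
                          \<in> vstates s (latest s (rtime s i)) (rtime s i)"
  shows "answer s A i n \<in> vstates s (latest s (rtime s i)) (rtime s i)"
proof (cases "A = ICNB")
  case True
  have "\<not> is_uc (gstate s (latest s (rtime s i)) (rtime s i) n)"
    using committed_mem committed_no_uc by (metis gstate_mem_vstates_iff)
  then show ?thesis
    using True answer_ICNB_eq_latest[OF valid] by (simp add: vstates_def)
next
  case False
  then show ?thesis
    using answer_latest_or_committed[OF \<open>1 \<le> i\<close> False, of s] committed_mem
    by (auto simp: vstates_def)
qed

lemma card_stale_answers_le_GCNB:
  fixes s :: "('n::finite) scen"
  assumes "valid_scen s" and "1 \<le> i"
  shows "card (stale_answers s A i) \<le> card (stale_answers s GCNB i)"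
proof -
  let ?t = "rtime s i"
  let ?W = "vstates s (latest s ?t) ?t"
  let ?stale_nodes = "{n \<in> viewport s i. gstate s (committed s ?t) ?t n \<notin> ?W}"
  have "stale_answers s A i \<subseteq> answer s A i ` ?stale_nodes"
    using answer_mem_latest_if_committed_mem_latest[OF assms]
    by (auto simp: stale_answers_def H_def)
  then have "card (stale_answers s A i) \<le> card ?stale_nodes"
    by (meson card_image_le card_mono finite finite_imageI order_trans)
  also have "\<dots> = card (gstate s (committed s ?t) ?t ` ?stale_nodes)"
    by (rule card_image[symmetric]) (meson inj_gstate inj_on_subset subset_UNIV)
  also have "gstate s (committed s ?t) ?t ` ?stale_nodes = stale_answers s GCNB i"
    by (auto simp: stale_answers_def H_def committed_no_uc)
  finally show ?thesis .
qed

lemma invisibility_mono: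
  assumes "valid_scen s"
    and "\<And>i. \<lbrakk>1 \<le> i; i < nR s\<rbrakk> \<Longrightarrow> card (uc_answers s A i) \<le> card (uc_answers s B i)"
  shows "invisibility s A \<le> invisibility s B"
  unfolding invisibility_def uc_answers_def[symmetric]
  using assms valid_scen_rtime_mono[OF assms(1)]
  by (intro sum_mono mult_right_mono) auto

lemma staleness_eq:
  fixes s :: "('n::finite) scen"
  shows "staleness s A = (\<Sum>i\<in>{1..<nR s}.
     real (card (stale_answers s A i)) * (rtime s (i + 1) - rtime s i))"
  unfolding staleness_def stale_answers_def
  by (intro sum.cong refl arg_cong2[where f = "(*)"]) (simp add: sum.If_cases Int_def finite_H)

lemma staleness_mono:
  fixes s :: "('n::finite) scen"
  assumes "valid_scen s"
    and "\<And>i. \<lbrakk>1 \<le> i; i < nR s\<rbrakk> \<Longrightarrow> card (stale_answers s A i) \<le> card (stale_answers s B i)"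
  shows "staleness s A \<le> staleness s B"
  unfolding staleness_eq
  using assms valid_scen_rtime_mono[OF assms(1)]
  by (intro sum_mono mult_right_mono) auto

theorem theorem2p8:
  fixes s :: "('n::finite) scen" and A :: lens
  assumes "valid_scen s"
    and "A \<in> {LCNB, LCMB, ICNB} \<union> range kGCNB \<union> range kLCNB \<union> range kLCMB"
  shows "staleness s GCPB \<le> staleness s A \<and> staleness s A \<le> staleness s GCNB \<and>
         invisibility s GCPB \<ge> invisibility s A \<and> invisibility s A \<ge> invisibility s GCNB"
proof -
  \<comment> \<open>The bounds hold for every lens.\<close>
  have "staleness s GCPB \<le> staleness s A"
    by (rule staleness_mono[OF assms(1)]) (simp add: stale_answers_GCPB)
  moreover have "staleness s A \<le> staleness s GCNB"
    by (rule staleness_mono[OF assms(1) card_stale_answers_le_GCNB[OF assms(1)]])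
  moreover have "invisibility s A \<le> invisibility s GCPB"
    by (rule invisibility_mono[OF assms(1)]) (rule card_uc_answers_le_GCPB)
  moreover have "invisibility s GCNB \<le> invisibility s A"
    by (rule invisibility_mono[OF assms(1)]) (simp add: uc_answers_GCNB)
  ultimately show ?thesis
    by simp
qed

end
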